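(* Let $\epsilon\le 1/10$ and consider the multi-value algorithm against a late $\epsilon$-bounded adaptive blocking adversary. There are constants $\rho\in(0,1)$ and $\alpha>0$ such that, for any iteration $t$ with $r=\sigma_{t-1}/n<\rho$, with high probability $\sigma_t\ge\max\{(1+\alpha)\sigma_{t-1},\Theta(\log n)\}$.
   Context: Model: $n$ anonymous nodes, fully interconnected, synchronous rounds; in each round every node first receives the non-blocked messages sent to it in the previous round, computes, then sends messages. Late $\epsilon$-bounded adaptive adversary: at the start of each round $t\ge2$ it knows the full system state at the beginning of round $t-1$ and blocks a set $B_t$ of at most $\epsilon n$ nodes in round $t$ (blocked nodes neither send nor receive in that round); in round 1 it knows the initial state but not that round's coin flips. W.h.p. means with probability at least $1-n^{-\Omega(1)}$. Multi-value algorithm (constants $c_1,c_2,c_3>0$; inputs from a domain of size polynomial in $n$; $\bot\le x$ for all $x$): (1) every node $u$ initializes $x_u$ to its input and becomes active with probability $c_1\log n/n$; (2) each active node sends $x_u$ to $\lceil c_2\log n\rceil$ nodes chosen uniformly at random; (3) every inactive or blocked node $v$ sets $x_v=\bot$; (4) for iterations $t=1,\dots,\lceil c_3\log n\rceil$, every node $v$ sets $x_v=\max(R\cup\{x_v\})$ with $R$ the set of newly received values, becomes active if $x_v\neq\bot$, and, if $t<c_3\log n$ and $v$ is active, sends $x_v$ to $2$ nodes chosen uniformly at random; (5) every node decides on $x_u$. Let $A$ be the set of nodes active in round 1 and $B_1$ those blocked in round 1; $x^*$ is the maximum input among nodes in $A\setminus B_1$; $\sigma_t$ is the number of nodes whose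 value is $x^*$ at the end of iteration $t$. *)

theory Defs
  imports "HOL-Probability.Probability" "HOL-Library.Multiset"
begin

text \<open>Nodes are 0..n-1 (indices are for modelling only). A node value is
  nat option; None plays the role of bot, which is below every value.
  A global state (at the beginning of a round) is the vector of node values
  together with the multiset of in-flight messages (target, value) sent in the
  previous round.\<close>

type_synonym vals = "nat \<Rightarrow> nat option"
type_synonym gstate = "vals \<times> (nat \<times> nat) multiset"

text \<open>A deterministic adaptive adversary: for round s it gets the history of
  global states at the beginning of rounds 1..s-1 (for s = 1: the initial
  state) and returns the set of nodes blocked in round s.\<close>
type_synonym adversary = "nat \<Rightarrow> gstate list \<Rightarrow> nat set"

definition adv_ok :: "nat \<Rightarrow> real \<Rightarrow> adversary \<Rightarrow> bool" where
  "adv_ok n \<epsilon> adv \<longleftrightarrow>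
     (\<forall>s h. adv s h \<subseteq> {..<n} \<and> real (card (adv s h)) \<le> \<epsilon> * real n)"

definition omax :: "nat option \<Rightarrow> nat option \<Rightarrow> nat option" where
  "omax a b = (case a of None \<Rightarrow> b
                 | Some x \<Rightarrow> (case b of None \<Rightarrow> Some x | Some y \<Rightarrow> Some (max x y)))"

definition unif_targets :: "nat \<Rightarrow> nat \<Rightarrow> (nat \<times> nat \<Rightarrow> nat) pmf" where
  "unif_targets n k = Pi_pmf ({..<n} \<times> {..<k}) 0 (\<lambda>_. pmf_of_set {..<n})"

definition init_state :: "nat \<Rightarrow> (nat \<Rightarrow> nat) \<Rightarrow> gstate" where
  "init_state n inp = ((\<lambda>v. if v < n then Some (inp v) else None), {#})"

text \<open>Round 1: steps (1)-(3). B is the set blocked in round 1.\<close>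
definition round1 :: "nat \<Rightarrow> real \<Rightarrow> real \<Rightarrow> (nat \<Rightarrow> nat) \<Rightarrow> nat set \<Rightarrow> gstate pmf" where
  "round1 n c1 c2 inp B =
     bind_pmf (Pi_pmf {..<n} False (\<lambda>_. bernoulli_pmf (c1 * ln (real n) / real n))) (\<lambda>coin.
     map_pmf (\<lambda>tg.
       ((\<lambda>v. if v < n \<and> coin v \<and> v \<notin> B then Some (inp v) else None),
        image_mset (\<lambda>(u, j). (tg (u, j), inp u))
          (filter_mset (\<lambda>(u, j). coin u \<and> u \<notin> B)
             (mset_set ({..<n} \<times> {..<nat \<lceil>c2 * ln (real n)\<rceil>})))))
       (unif_targets n (nat \<lceil>c2 * ln (real n)\<rceil>)))"

definition received :: "(nat \<times> nat) multiset \<Rightarrow> nat \<Rightarrow> nat set" where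
  "received M v = {a. (v, a) \<in># M}"

definition update :: "nat set \<Rightarrow> gstate \<Rightarrow> vals" where
  "update B st v =
     (if v \<notin> B \<and> received (snd st) v \<noteq> {}
      then omax (fst st v) (Some (Max (received (snd st) v))) else fst st v)"

text \<open>Iteration t (executed in round t+1) with blocked set B, from the state st
  at the beginning of that round.\<close>
definition iter_round :: "nat \<Rightarrow> real \<Rightarrow> nat \<Rightarrow> nat set \<Rightarrow> gstate \<Rightarrow> gstate pmf" where
  "iter_round n c3 t B st =
     map_pmf (\<lambda>tg.
       (update B st,
        image_mset (\<lambda>(v, j). (tg (v, j), the (update B st v)))
          (filter_mset (\<lambda>(v, j). v < n \<and> update B st v \<noteq> None \<and> v \<notin> B
                                  \<and> real t < c3 * ln (real n))
             (mset_set ({..<n} \<times> {..<2::nat})))))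
       (unif_targets n 2)"

text \<open>exec ... m : distribution of the list of global states at the beginning
  of rounds 1..m+1 (so index i holds the state after round i; index t+1 is the
  state at the end of iteration t, index 1 the state after step (3)).\<close>
primrec exec :: "nat \<Rightarrow> real \<Rightarrow> real \<Rightarrow> real \<Rightarrow> (nat \<Rightarrow> nat) \<Rightarrow> adversary \<Rightarrow> nat
                 \<Rightarrow> gstate list pmf" where
  "exec n c1 c2 c3 inp adv 0 = return_pmf [init_state n inp]"
| "exec n c1 c2 c3 inp adv (Suc m) =
     bind_pmf (exec n c1 c2 c3 inp adv m) (\<lambda>h.
       map_pmf (\<lambda>st. h @ [st])
         (if m = 0 then round1 n c1 c2 inp (adv 1 h)
          else iter_round n c3 m (adv (Suc m) (butlast h)) (last h)))"

text \<open>x* = maximum input among A minus B_1 (= nodes with a non-bot value after step 3).\<close>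
definition x_star :: "nat \<Rightarrow> gstate list \<Rightarrow> nat" where
  "x_star n h = Max {a. \<exists>v<n. fst (h ! 1) v = Some a}"

definition sigma :: "nat \<Rightarrow> gstate list \<Rightarrow> nat \<Rightarrow> nat" where
  "sigma n h t = card {v. v < n \<and> fst (h ! (t + 1)) v = Some (x_star n h)}"

end

theory Submission
  imports Defs "HOL-Real_Asymp.Real_Asymp"
begin

(* Call the nodes holding x* its holders.  The unblocked holders S of an iteration send 2|S|
  messages to uniformly random nodes, and the set blocked in the next round is chosen without
  knowledge of these targets.  While fewer than n/100 nodes hold x*, the holders and the blocked
  nodes cover at most n/100 + n/10 nodes, and a union bound shows that, except with probability
  2^(-2|S|/5), at least (6/5)|S| of the targets are distinct nodes that neither hold x* nor are
  blocked.  A new holder must have been unblocked, so |S| >= sigma_t - sigma_(t-1); hence the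
  invariant "6 sigma_(t-1) <= 5 sigma_t and sigma_t - sigma_(t-1) >= L", with L = Theta(log n),
  passes from one iteration to the next except with probability 2^(-L/5).  Round 1 establishes it
  because each initial holder sends c2 log n messages, and a union bound over the O(log n)
  iterations gives the theorem with rho = 1/100 and alpha = 1/5. *)

lemma measure_pmf_bind_le:
  assumes "\<And>x. x \<in> set_pmf p \<Longrightarrow> measure_pmf.prob (f x) A \<le> r"
  shows "measure_pmf.prob (bind_pmf p f) A \<le> r"
proof -
  obtain x where "x \<in> set_pmf p" using set_pmf_not_empty[of p] by blast
  then have r: "0 \<le> r" using assms measure_nonneg order_trans by metis
  have "emeasure (measure_pmf (bind_pmf p f)) A = (\<integral>\<^sup>+x. emeasure (f x) A \<partial>p)" by simp
  also have "\<dots> \<le> (\<integral>\<^sup>+x. ennreal r \<partial>p)"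
    by (intro nn_integral_mono_AE)
      (auto simp: AE_measure_pmf_iff measure_pmf.emeasure_eq_measure intro!: ennreal_leI assms)
  also have "\<dots> = ennreal r" by simp
  finally show ?thesis using r by (simp add: measure_pmf.emeasure_eq_measure)
qed

lemma measure_pmf_bind_le_failure:
  assumes "\<And>x. x \<in> set_pmf p \<Longrightarrow> x \<notin> C \<Longrightarrow> set_pmf (f x) \<inter> A = {}"
  shows "measure_pmf.prob (bind_pmf p f) A \<le> measure_pmf.prob p C"
proof -
  have "emeasure (measure_pmf (bind_pmf p f)) A = (\<integral>\<^sup>+x. emeasure (f x) A \<partial>p)" by simp
  also have "\<dots> \<le> (\<integral>\<^sup>+x. indicator C x \<partial>p)"
  proof (intro nn_integral_mono_AE, unfold AE_measure_pmf_iff, intro ballI)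
    fix x assume x: "x \<in> set_pmf p"
    show "emeasure (measure_pmf (f x)) A \<le> indicator C x"
    proof (cases "x \<in> C")
      case True
      then show ?thesis by (simp add: measure_pmf.emeasure_le_1)
    next
      case False
      have "emeasure (measure_pmf (f x)) A = emeasure (measure_pmf (f x)) (A \<inter> set_pmf (f x))"
        by (simp add: emeasure_Int_set_pmf)
      then show ?thesis using assms[OF x False] by (simp add: Int_commute)
    qed
  qed
  also have "\<dots> = emeasure p C" by simp
  finally show ?thesis by (simp add: measure_pmf.emeasure_eq_measure)
qed

lemma measure_pmf_mono_on_support:
  assumes "\<And>x. x \<in> set_pmf p \<Longrightarrow> x \<in> A \<Longrightarrow> x \<in> B"
  shows "measure_pmf.prob p A \<le> measure_pmf.prob p B"
proof -
  have "measure_pmf.prob p A = measure_pmf.prob p (A \<inter> set_pmf p)"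
    by (simp add: measure_Int_set_pmf)
  also have "\<dots> \<le> measure_pmf.prob p B"
    using assms by (intro measure_pmf.finite_measure_mono) auto
  finally show ?thesis .
qed

section \<open>Random targets\<close>

lemma prob_targets_covered:
  fixes I J G :: "'i set" and Bad :: "nat set"
  assumes I: "finite I" and GJ: "G \<subseteq> J" and JI: "J \<subseteq> I" and n: "n > 0"
    and Bad: "finite Bad" "card Bad \<le> b"
  shows "measure_pmf.prob (Pi_pmf I 0 (\<lambda>_. pmf_of_set {..<n}))
            {tg. \<forall>i\<in>J - G. tg i \<in> Bad \<union> tg ` G}
         \<le> ((real b + card G) / n) ^ card (J - G)"
proof -
  have fG: "finite G" using GJ JI I by (meson finite_subset)
  define P where "P = pair_pmf (Pi_pmf G 0 (\<lambda>_. pmf_of_set {..<n}))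
                               (Pi_pmf (I - G) 0 (\<lambda>_. pmf_of_set {..<n}))"
  define glue where "glue = (\<lambda>(f, g) x. if x \<in> G then f x else (g x :: nat))"
  have "Pi_pmf (G \<union> (I - G)) 0 (\<lambda>_. pmf_of_set {..<n}) = map_pmf glue P"
    unfolding P_def glue_def using I fG by (intro Pi_pmf_union) auto
  moreover have "G \<union> (I - G) = I" using GJ JI by blast
  ultimately have split: "Pi_pmf I 0 (\<lambda>_. pmf_of_set {..<n}) = map_pmf glue P" by simp
  have "glue -` {tg. \<forall>i\<in>J - G. tg i \<in> Bad \<union> tg ` G} = {(f, g). \<forall>i\<in>J - G. g i \<in> Bad \<union> f ` G}"
  proof -
    have "\<And>f g. (\<lambda>x. if x \<in> G then f x else g x) ` G = f ` G" by auto
    then show ?thesis by (auto simp: glue_def vimage_def)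
  qed
  then have "measure_pmf.prob (Pi_pmf I 0 (\<lambda>_. pmf_of_set {..<n})) {tg. \<forall>i\<in>J - G. tg i \<in> Bad \<union> tg ` G}
      = measure_pmf.prob P {(f, g). \<forall>i\<in>J - G. g i \<in> Bad \<union> f ` G}"
    by (simp add: split)
  also have "\<dots> \<le> ((real b + card G) / n) ^ card (J - G)"
    unfolding P_def pair_pmf_def
  proof (rule measure_pmf_bind_le)
    fix f
    let ?S = "Bad \<union> f ` G"
    have "card (?S \<inter> {..<n}) \<le> card ?S" by (rule card_mono) (use Bad fG in auto)
    also have "\<dots> \<le> card Bad + card (f ` G)" by (rule card_Un_le)
    finally have cS: "card (?S \<inter> {..<n}) \<le> b + card G"
      using card_image_le[OF fG, of f] Bad by linarith
    have "measure_pmf.prob (Pi_pmf (I - G) 0 (\<lambda>_. pmf_of_set {..<n}) \<bind> (\<lambda>g. return_pmf (f, g)))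
          {(f, g). \<forall>i\<in>J - G. g i \<in> Bad \<union> f ` G}
        = measure_pmf.prob (Pi_pmf (I - G) 0 (\<lambda>_. pmf_of_set {..<n}))
            {g. \<forall>i\<in>J - G. g i \<in> ?S}"
      by (simp add: bind_return_pmf' map_pmf_def[symmetric] vimage_def)
    also have "{g. \<forall>i\<in>J - G. g i \<in> ?S} = Pi (I - G) (\<lambda>i. if i \<in> J - G then ?S else UNIV)"
      using JI by (auto simp: Pi_def)
    also have "measure_pmf.prob (Pi_pmf (I - G) 0 (\<lambda>_. pmf_of_set {..<n})) \<dots>
        = (\<Prod>i\<in>I - G. measure_pmf.prob (pmf_of_set {..<n}) (if i \<in> J - G then ?S else UNIV))"
      by (rule measure_Pi_pmf_Pi) (use I in auto)
    also have "\<dots> = (\<Prod>i\<in>J - G. measure_pmf.prob (pmf_of_set {..<n}) ?S)"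
      using JI I by (intro prod.mono_neutral_cong_right) auto
    also have "\<dots> = (real (card (?S \<inter> {..<n})) / n) ^ card (J - G)"
      using n by (subst measure_pmf_of_set) (auto simp: Int_commute)
    also have "\<dots> \<le> ((real b + card G) / n) ^ card (J - G)"
      using cS n by (intro power_mono divide_right_mono) auto
    finally show "measure_pmf.prob (Pi_pmf (I - G) 0 (\<lambda>_. pmf_of_set {..<n}) \<bind> (\<lambda>g. return_pmf (f, g)))
          {(f, g). \<forall>i\<in>J - G. g i \<in> Bad \<union> f ` G} \<le> ((real b + card G) / n) ^ card (J - G)" .
  qed
  finally show ?thesis .
qed

text \<open>Union bound over G: if fewer than (3/5)|J| targets are fresh, the targets of some set G of
  fewer than (3/5)|J| indices cover all targets of J - G outside Bad.\<close>

lemma prob_few_fresh_targets: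
  fixes I J :: "'i set" and Bad :: "nat set"
  assumes I: "finite I" and JI: "J \<subseteq> I" and n: "n > 0"
    and Bad: "finite Bad" "card Bad \<le> b"
    and small: "real b + 3/5 * card J \<le> real n / 8"
  shows "measure_pmf.prob (Pi_pmf I 0 (\<lambda>_. pmf_of_set {..<n}))
            {tg. real (card (tg ` J - Bad)) < 3/5 * card J}
         \<le> 2 powr (- real (card J) / 5)"
proof -
  let ?p = "Pi_pmf I 0 (\<lambda>_. pmf_of_set {..<n})"
  have fJ: "finite J" by (rule finite_subset[OF JI I])
  define \<G> where "\<G> = {G. G \<subseteq> J \<and> real (card G) < 3/5 * card J}"
  define A where "A = (\<lambda>G. {tg::'i\<Rightarrow>nat. \<forall>i\<in>J - G. tg i \<in> Bad \<union> tg ` G})"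
  have fin\<G>: "finite \<G>" by (rule finite_subset[of _ "Pow J"]) (use fJ in \<open>auto simp: \<G>_def\<close>)
  have card\<G>: "card \<G> \<le> 2 ^ card J"
    using card_mono[of "Pow J" \<G>] card_Pow[OF fJ] fJ unfolding \<G>_def by auto
  have cover: "{tg. real (card (tg ` J - Bad)) < 3/5 * card J} \<subseteq> (\<Union>G\<in>\<G>. A G)"
  proof
    fix tg assume tg: "tg \<in> {tg. real (card (tg ` J - Bad)) < 3/5 * card J}"
    obtain G where GJ: "G \<subseteq> J" and inj: "inj_on tg G" and G: "tg ` J - Bad = tg ` G"
      using subset_image_inj[of "tg ` J - Bad" tg J] by blast
    have "card G = card (tg ` J - Bad)" using card_image[OF inj] G by simp
    then have "G \<in> \<G>" using GJ tg unfolding \<G>_def by auto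
    moreover have "tg \<in> A G" using G unfolding A_def by blast
    ultimately show "tg \<in> (\<Union>G\<in>\<G>. A G)" by blast
  qed
  have each: "measure_pmf.prob ?p (A G) \<le> (1/8) powr (2/5 * card J)" if "G \<in> \<G>" for G
  proof -
    have GJ: "G \<subseteq> J" and cardG: "real (card G) < 3/5 * card J" using that unfolding \<G>_def by auto
    have k: "real (card (J - G)) \<ge> 2/5 * card J"
      using card_Diff_subset[OF finite_subset[OF GJ fJ] GJ] card_mono[OF fJ GJ] cardG
      by (simp add: of_nat_diff)
    have q: "(real b + card G) / n \<le> 1/8" using small cardG n by (simp add: field_simps)
    have "measure_pmf.prob ?p (A G) \<le> ((real b + card G) / n) ^ card (J - G)"
      unfolding A_def by (rule prob_targets_covered[OF I GJ JI n Bad])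
    also have "\<dots> \<le> (1/8) ^ card (J - G)"
      using q by (intro power_mono) auto
    also have "\<dots> \<le> (1/8) powr (2/5 * card J)"
      using k by (simp add: powr_realpow[symmetric] powr_mono')
    finally show ?thesis .
  qed
  have "measure_pmf.prob ?p {tg. real (card (tg ` J - Bad)) < 3/5 * card J}
      \<le> measure_pmf.prob ?p (\<Union>G\<in>\<G>. A G)"
    using cover by (intro measure_pmf.finite_measure_mono) auto
  also have "\<dots> \<le> (\<Sum>G\<in>\<G>. measure_pmf.prob ?p (A G))"
    by (rule measure_pmf.finite_measure_subadditive_finite) (use fin\<G> in auto)
  also have "\<dots> \<le> card \<G> * (1/8) powr (2/5 * card J)"
    using sum_mono[OF each] by simp
  also have "\<dots> \<le> 2 ^ card J * 2 powr (- 6/5 * card J)"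
  proof -
    have eighth: "(1/8::real) = 2 powr (-3)" by (simp add: powr_minus powr_numeral)
    have "(1/8::real) powr (2/5 * card J) = 2 powr (- 6/5 * card J)"
      by (subst eighth) (simp add: powr_powr)
    then show ?thesis using card\<G> by (simp add: mult_right_mono)
  qed
  also have "\<dots> = 2 powr card J * 2 powr (- 6/5 * card J)" by (simp add: powr_realpow)
  also have "\<dots> = 2 powr (- real (card J) / 5)" by (simp add: powr_add[symmetric])
  finally show ?thesis .
qed

section \<open>Holders of a value\<close>

definition holders :: "nat \<Rightarrow> nat \<Rightarrow> vals \<Rightarrow> nat set" where
  "holders n x vals = {v. v < n \<and> vals v = Some x}"

definition bounded_by :: "nat \<Rightarrow> gstate \<Rightarrow> bool" where
  "bounded_by x st \<longleftrightarrow> (\<forall>v a. fst st v = Some a \<longrightarrow> a \<le> x) \<and> (\<forall>p\<in>#snd st. snd p \<le> x)"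

lemma holders_subset: "holders n x vals \<subseteq> {..<n}"
  by (auto simp: holders_def)

lemma finite_holders [simp]: "finite (holders n x vals)"
  using finite_subset[OF holders_subset] by blast

lemma sigma_eq_card_holders: "sigma n h t = card (holders n (x_star n h) (fst (h ! Suc t)))"
  by (simp add: sigma_def holders_def)

lemma x_star_append: "2 \<le> length h \<Longrightarrow> x_star n (h @ hs) = x_star n h"
  by (simp add: x_star_def nth_append)

lemma sigma_append: "Suc t < length h \<Longrightarrow> sigma n (h @ hs) t = sigma n h t"
  by (simp add: sigma_def x_star_append nth_append)

lemma sigma_append_pair:
  assumes "length h = Suc m" and "1 \<le> m"
  shows "sigma n (h @ [s1, s2]) (m - 1) = card (holders n (x_star n h) (fst (last h)))"
    and "sigma n (h @ [s1, s2]) m = card (holders n (x_star n h) (fst s1))"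
    and "sigma n (h @ [s1, s2]) (Suc m) = card (holders n (x_star n h) (fst s2))"
proof -
  have "last h = h ! m" using assms(1) last_conv_nth[of h] by fastforce
  then show "sigma n (h @ [s1, s2]) (m - 1) = card (holders n (x_star n h) (fst (last h)))"
    and "sigma n (h @ [s1, s2]) m = card (holders n (x_star n h) (fst s1))"
    and "sigma n (h @ [s1, s2]) (Suc m) = card (holders n (x_star n h) (fst s2))"
    using assms by (auto simp: sigma_eq_card_holders x_star_append nth_append)
qed

lemma received_finite: "finite (received M v)"
proof -
  have "received M v \<subseteq> snd ` set_mset M" unfolding received_def by force
  then show ?thesis by (rule finite_subset) auto
qed

lemma Max_received_le:
  "bounded_by x st \<Longrightarrow> received (snd st) v \<noteq> {} \<Longrightarrow> Max (received (snd st) v) \<le> x"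
  using received_finite[of "snd st" v] by (force simp: bounded_by_def received_def)

lemma update_le: "bounded_by x st \<Longrightarrow> update B st v = Some a \<Longrightarrow> a \<le> x"
  using Max_received_le[of x st v]
  by (auto simp: update_def omax_def bounded_by_def split: if_splits option.splits)

lemma update_blocked: "v \<in> B \<Longrightarrow> update B st v = fst st v"
  by (simp add: update_def)

lemma card_holders_update_le:
  "card (holders n x (update B st)) \<le> card (holders n x (fst st)) + card (holders n x (update B st) - B)"
proof -
  have "holders n x (update B st) \<subseteq> holders n x (fst st) \<union> (holders n x (update B st) - B)"
    by (auto simp: holders_def update_blocked)
  then have "card (holders n x (update B st)) \<le> card (holders n x (fst st) \<union> (holders n x (update B st) - B))"
    by (intro card_mono) auto
  also have "\<dots> \<le> card (holders n x (fst st)) + card (holders n x (update B st) - B)"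
    by (rule card_Un_le)
  finally show ?thesis .
qed

lemma update_received:
  assumes "bounded_by x st" "v \<notin> B" "(v, x) \<in># snd st"
  shows "update B st v = Some x"
proof -
  have x: "x \<in> received (snd st) v" using assms(3) by (simp add: received_def)
  then have "Max (received (snd st) v) = x"
    using Max_received_le[OF assms(1)] Max_ge[OF received_finite x] by fastforce
  moreover have "\<forall>a. fst st v = Some a \<longrightarrow> a \<le> x" using assms(1) by (auto simp: bounded_by_def)
  ultimately show ?thesis using assms(2) x
    by (auto simp: update_def omax_def max_def split: option.splits)
qed

lemma holders_update_mono:
  assumes "bounded_by x st"
  shows "holders n x (fst st) \<subseteq> holders n x (update B st)"
proof
  fix v assume v: "v \<in> holders n x (fst st)"
  show "v \<in> holders n x (update B st)"
  proof (cases "received (snd st) v = {}")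
    case False
    then have "Max (received (snd st) v) \<le> x" using Max_received_le[OF assms] by blast
    then show ?thesis using v by (auto simp: holders_def update_def omax_def max_def)
  qed (use v in \<open>simp add: holders_def update_def\<close>)
qed

lemma card_holders_update:
  assumes bounded: "bounded_by x st" and W: "W \<subseteq> {..<n}" and sent: "\<forall>w\<in>W. (w, x) \<in># snd st"
  shows "card (holders n x (fst st)) + card (W - (holders n x (fst st) \<union> B))
    \<le> card (holders n x (update B st))"
proof -
  let ?H = "holders n x (fst st)"
  have "W - (?H \<union> B) \<subseteq> holders n x (update B st)"
    using W sent update_received[OF bounded] by (auto simp: holders_def)
  then have "?H \<union> (W - (?H \<union> B)) \<subseteq> holders n x (update B st)"
    using holders_update_mono[OF bounded] by blast
  moreover have "finite (W - (?H \<union> B))" using finite_subset[OF W] by blast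
  moreover have "card (?H \<union> (W - (?H \<union> B))) = card ?H + card (W - (?H \<union> B))"
    using calculation(2) by (intro card_Un_disjoint) auto
  ultimately show ?thesis using card_mono[OF finite_holders] by metis
qed

lemma unif_targets_range:
  assumes "tg \<in> set_pmf (unif_targets n k)" and "v < n" and "j < k"
  shows "tg (v, j) < n"
proof -
  have "set_pmf (pmf_of_set {..<n}) = {..<n}" using \<open>v < n\<close> by (intro set_pmf_of_set) auto
  then show ?thesis using assms by (auto simp: unif_targets_def set_Pi_pmf PiE_dflt_def)
qed

text \<open>The next blocked set B does not depend on the targets: this is where the lateness of the
  adversary enters.\<close>

lemma prob_spreading_fails:
  fixes vals :: vals and M :: "(nat \<times> nat \<Rightarrow> nat) \<Rightarrow> (nat \<times> nat) multiset"
  assumes n: "n > 0" and J: "J \<subseteq> {..<n} \<times> {..<k}" and B: "B \<subseteq> {..<n}"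
    and bounded: "\<And>tg. tg \<in> set_pmf (unif_targets n k) \<Longrightarrow> bounded_by x (vals, M tg)"
    and sent: "\<And>tg j. tg \<in> set_pmf (unif_targets n k) \<Longrightarrow> j \<in> J \<Longrightarrow> (tg j, x) \<in># M tg"
    and small: "real (card (holders n x vals)) + card B + 3/5 * card J \<le> real n / 8"
  shows "measure_pmf.prob (unif_targets n k)
      {tg. real (card (holders n x (update B (vals, M tg))))
             < card (holders n x vals) + 3/5 * card J}
    \<le> 2 powr (- real (card J) / 5)"
proof -
  let ?H = "holders n x vals"
  have "measure_pmf.prob (unif_targets n k)
      {tg. real (card (holders n x (update B (vals, M tg)))) < card ?H + 3/5 * card J}
    \<le> measure_pmf.prob (unif_targets n k) {tg. real (card (tg ` J - (?H \<union> B))) < 3/5 * card J}"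
  proof (rule measure_pmf_mono_on_support)
    fix tg assume tg: "tg \<in> set_pmf (unif_targets n k)"
    have "tg ` J \<subseteq> {..<n}" using J unif_targets_range[OF tg] by auto
    then have "card ?H + card (tg ` J - (?H \<union> B)) \<le> card (holders n x (update B (vals, M tg)))"
      using card_holders_update[OF bounded[OF tg], of "tg ` J"] sent[OF tg] by auto
    then show "tg \<in> {tg. real (card (holders n x (update B (vals, M tg)))) < card ?H + 3/5 * card J}
      \<Longrightarrow> tg \<in> {tg. real (card (tg ` J - (?H \<union> B))) < 3/5 * card J}"
      by auto
  qed
  also have "\<dots> \<le> 2 powr (- real (card J) / 5)"
    unfolding unif_targets_def
  proof (rule prob_few_fresh_targets[OF _ J n])
    show "finite (?H \<union> B)" using finite_subset[OF B] by auto
    show "real (card ?H + card B) + 3/5 * card J \<le> real n / 8" using small by simp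
  qed (auto intro: card_Un_le)
  finally show ?thesis .
qed

definition round1_vals :: "nat \<Rightarrow> (nat \<Rightarrow> nat) \<Rightarrow> nat set \<Rightarrow> (nat \<Rightarrow> bool) \<Rightarrow> vals" where
  "round1_vals n inp B coin = (\<lambda>v. if v < n \<and> coin v \<and> v \<notin> B then Some (inp v) else None)"

definition round1_msgs :: "nat \<Rightarrow> nat \<Rightarrow> (nat \<Rightarrow> nat) \<Rightarrow> nat set \<Rightarrow> (nat \<Rightarrow> bool)
    \<Rightarrow> (nat \<times> nat \<Rightarrow> nat) \<Rightarrow> (nat \<times> nat) multiset" where
  "round1_msgs n k inp B coin tg = image_mset (\<lambda>(u, j). (tg (u, j), inp u))
     (filter_mset (\<lambda>(u, j). coin u \<and> u \<notin> B) (mset_set ({..<n} \<times> {..<k})))"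

definition iter_msgs :: "nat \<Rightarrow> real \<Rightarrow> nat \<Rightarrow> nat set \<Rightarrow> gstate \<Rightarrow> (nat \<times> nat \<Rightarrow> nat)
    \<Rightarrow> (nat \<times> nat) multiset" where
  "iter_msgs n c3 t B st tg = image_mset (\<lambda>(v, j). (tg (v, j), the (update B st v)))
     (filter_mset (\<lambda>(v, j). v < n \<and> update B st v \<noteq> None \<and> v \<notin> B \<and> real t < c3 * ln (real n))
        (mset_set ({..<n} \<times> {..<2::nat})))"

lemma round1_eq:
  "round1 n c1 c2 inp B =
     bind_pmf (Pi_pmf {..<n} False (\<lambda>_. bernoulli_pmf (c1 * ln (real n) / real n))) (\<lambda>coin.
       map_pmf (\<lambda>tg. (round1_vals n inp B coin, round1_msgs n (nat \<lceil>c2 * ln (real n)\<rceil>) inp B coin tg))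
         (unif_targets n (nat \<lceil>c2 * ln (real n)\<rceil>)))"
  unfolding round1_def round1_vals_def round1_msgs_def ..

lemma iter_round_eq:
  "iter_round n c3 t B st = map_pmf (\<lambda>tg. (update B st, iter_msgs n c3 t B st tg)) (unif_targets n 2)"
  unfolding iter_round_def iter_msgs_def ..

lemma fst_iter_round: "st' \<in> set_pmf (iter_round n c3 t B st) \<Longrightarrow> fst st' = update B st"
  by (auto simp: iter_round_eq)

lemma round1_max_bounded:
  "bounded_by (Max {a. \<exists>v<n. round1_vals n inp B coin v = Some a})
     (round1_vals n inp B coin, round1_msgs n k inp B coin tg)"
proof -
  let ?X = "{a. \<exists>v<n. round1_vals n inp B coin v = Some a}"
  have "?X \<subseteq> inp ` {..<n}" by (auto simp: round1_vals_def split: if_splits)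
  then have fin: "finite ?X" by (rule finite_subset) auto
  show ?thesis unfolding bounded_by_def
  proof (intro conjI allI impI ballI)
    fix v a assume "fst (round1_vals n inp B coin, round1_msgs n k inp B coin tg) v = Some a"
    then have "a \<in> ?X" by (auto simp: round1_vals_def split: if_splits)
    then show "a \<le> Max ?X" using fin by simp
  next
    fix p assume "p \<in># snd (round1_vals n inp B coin, round1_msgs n k inp B coin tg)"
    then obtain u j where "u < n" "coin u" "u \<notin> B" "p = (tg (u, j), inp u)"
      by (auto simp: round1_msgs_def)
    then have "snd p \<in> ?X" by (auto simp: round1_vals_def)
    then show "snd p \<le> Max ?X" using fin by simp
  qed
qed

lemma iter_bounded:
  assumes "bounded_by x st"
  shows "bounded_by x (update B st, iter_msgs n c3 t B st tg)"
  unfolding bounded_by_def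
proof (intro conjI allI impI ballI)
  fix v a assume "fst (update B st, iter_msgs n c3 t B st tg) v = Some a"
  then show "a \<le> x" using update_le[OF assms] by simp
next
  fix p assume "p \<in># snd (update B st, iter_msgs n c3 t B st tg)"
  then obtain v where "update B st v = Some (snd p)"
    by (auto simp: iter_msgs_def)
  then show "snd p \<le> x" using update_le[OF assms] by blast
qed

lemma round1_sends:
  assumes "u \<in> holders n x (round1_vals n inp B coin)" and "j < k"
  shows "(tg (u, j), x) \<in># round1_msgs n k inp B coin tg"
proof -
  have "(u, j) \<in># filter_mset (\<lambda>(u, j). coin u \<and> u \<notin> B) (mset_set ({..<n} \<times> {..<k}))"
    using assms by (auto simp: holders_def round1_vals_def split: if_splits)
  moreover have "(tg (u, j), x) = (\<lambda>(u, j). (tg (u, j), inp u)) (u, j)"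
    using assms(1) by (auto simp: holders_def round1_vals_def split: if_splits)
  ultimately show ?thesis unfolding round1_msgs_def multiset.set_map by (rule image_eqI[rotated])
qed

lemma iter_sends:
  assumes "real t < c3 * ln (real n)" and "u \<in> holders n x (update B st) - B" and "j < 2"
  shows "(tg (u, j), x) \<in># iter_msgs n c3 t B st tg"
proof -
  have "(u, j) \<in># filter_mset (\<lambda>(v, j). v < n \<and> update B st v \<noteq> None \<and> v \<notin> B
      \<and> real t < c3 * ln (real n)) (mset_set ({..<n} \<times> {..<2::nat}))"
    using assms by (auto simp: holders_def)
  moreover have "(tg (u, j), x) = (\<lambda>(v, j). (tg (v, j), the (update B st v))) (u, j)"
    using assms(2) by (simp add: holders_def)
  ultimately show ?thesis unfolding iter_msgs_def multiset.set_map by (rule image_eqI[rotated])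
qed

lemma prob_round_stalls:
  fixes vals :: vals and M :: "(nat \<times> nat \<Rightarrow> nat) \<Rightarrow> (nat \<times> nat) multiset" and L :: real
  assumes n: "n > 0" and J: "J \<subseteq> {..<n} \<times> {..<k}" and B: "B \<subseteq> {..<n}"
    and bounded: "\<And>tg. tg \<in> set_pmf (unif_targets n k) \<Longrightarrow> bounded_by x (vals, M tg)"
    and sent: "\<And>tg j. tg \<in> set_pmf (unif_targets n k) \<Longrightarrow> j \<in> J \<Longrightarrow> (tg j, x) \<in># M tg"
    and stall: "\<And>tg st. fst st = update B (vals, M tg) \<Longrightarrow> f tg st \<in> A \<Longrightarrow>
      L \<le> card J \<and> real (card (holders n x vals)) + card B + 3/5 * card J \<le> real n / 8
      \<and> real (card (holders n x (fst st))) < card (holders n x vals) + 3/5 * card J"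
  shows "measure_pmf.prob (bind_pmf (unif_targets n k) (\<lambda>tg.
      map_pmf (f tg) (iter_round n c3 t B (vals, M tg)))) A \<le> 2 powr (- L / 5)"
proof -
  define Q where "Q \<longleftrightarrow> L \<le> card J \<and> real (card (holders n x vals)) + card B + 3/5 * card J \<le> real n / 8"
  define C where "C = {tg. Q \<and> real (card (holders n x (update B (vals, M tg))))
                                < card (holders n x vals) + 3/5 * card J}"
  have "measure_pmf.prob (bind_pmf (unif_targets n k) (\<lambda>tg.
      map_pmf (f tg) (iter_round n c3 t B (vals, M tg)))) A \<le> measure_pmf.prob (unif_targets n k) C"
  proof (rule measure_pmf_bind_le_failure)
    fix tg assume "tg \<notin> C"
    then show "set_pmf (map_pmf (f tg) (iter_round n c3 t B (vals, M tg))) \<inter> A = {}"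
      using stall[of _ tg] fst_iter_round by (fastforce simp: C_def Q_def)
  qed
  also have "\<dots> \<le> 2 powr (- L / 5)"
  proof (cases Q)
    case True
    then have "measure_pmf.prob (unif_targets n k) C \<le> 2 powr (- real (card J) / 5)"
      using prob_spreading_fails[OF n J B bounded sent] by (simp add: C_def Q_def)
    also have "\<dots> \<le> 2 powr (- L / 5)" using True by (simp add: Q_def)
    finally show ?thesis .
  qed (simp add: C_def)
  finally show ?thesis .
qed

lemma adv_ok_blocked:
  assumes "adv_ok n \<epsilon> adv" and "\<epsilon> \<le> 1/10"
  shows "adv s h \<subseteq> {..<n}" and "real (card (adv s h)) \<le> real n / 10"
proof -
  show "adv s h \<subseteq> {..<n}" using assms(1) by (simp add: adv_ok_def)
  have "\<epsilon> * real n \<le> 1/10 * real n" using assms(2) by (intro mult_right_mono) auto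
  moreover have "real (card (adv s h)) \<le> \<epsilon> * real n" using assms(1) by (simp add: adv_ok_def)
  ultimately show "real (card (adv s h)) \<le> real n / 10" by simp
qed

lemma holders_Max_nonempty:
  assumes "\<exists>v<n. vals v \<noteq> None"
  shows "holders n (Max {a. \<exists>v<n. vals v = Some a}) vals \<noteq> {}"
proof -
  let ?X = "{a. \<exists>v<n. vals v = Some a}"
  have "?X \<subseteq> (the \<circ> vals) ` {..<n}" by force
  then have "finite ?X" by (rule finite_subset) auto
  moreover have "?X \<noteq> {}" using assms by auto
  ultimately have "Max ?X \<in> ?X" by (rule Max_in)
  then show ?thesis by (auto simp: holders_def)
qed

lemma obtain_message_subset:
  assumes "finite H" and "1 \<le> card H" and "real (card H) < real n / 100" and "1 \<le> K"
    and "L \<le> 3/5 * real K" and "L \<le> 3/5 * (real n / 100 - 1)"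
  obtains J where "J \<subseteq> H \<times> {..<K}" and "card H \<le> card J" and "L \<le> 3/5 * card J"
    and "real (card J) \<le> real n / 100"
proof -
  let ?M = "nat \<lfloor>real n / 100\<rfloor>"
  obtain J where J: "J \<subseteq> H \<times> {..<K}" and card_J: "card J = min (card H * K) ?M"
    using obtain_subset_with_card_n[of "min (card H * K) ?M" "H \<times> {..<K}"] assms(1)
    by (auto simp: card_cartesian_product)
  have HK: "card H \<le> card H * K" "real K \<le> real (card H * K)" using assms(2,4) by simp_all
  have HM: "card H \<le> ?M" using assms(3) by (simp add: le_nat_floor)
  have "card J \<le> ?M" using card_J by simp
  then have "real (card J) \<le> real n / 100" by linarith
  moreover have "L \<le> 3/5 * card J"
  proof (cases "card H * K \<le> ?M")
    case True
    then show ?thesis using card_J HK(2) assms(5) by simp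
  next
    case False
    then have "real (card J) = real ?M" using card_J by simp
    moreover have "real n / 100 - 1 \<le> real ?M" by linarith
    ultimately show ?thesis using assms(6) by (simp add: algebra_simps)
  qed
  moreover have "card H \<le> card J" using HK HM card_J by simp
  ultimately show ?thesis using that[OF J] by blast
qed

section \<open>Executions\<close>

definition steady_growth :: "real \<Rightarrow> nat \<Rightarrow> nat \<Rightarrow> bool" where
  "steady_growth L a b \<longleftrightarrow> 6 * a \<le> 5 * b \<and> L \<le> real b - real a"

definition stalled :: "nat \<Rightarrow> real \<Rightarrow> nat \<Rightarrow> gstate list set" where
  "stalled n L t = {h. (\<exists>v<n. fst (h ! 1) v \<noteq> None) \<and> real (sigma n h (t - 1)) < real n / 100
                      \<and> \<not> steady_growth L (sigma n h (t - 1)) (sigma n h t)}"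

context
  fixes n :: nat and c1 c2 c3 :: real and inp :: "nat \<Rightarrow> nat" and adv :: adversary
begin

abbreviation run :: "nat \<Rightarrow> gstate list pmf" where
  "run \<equiv> exec n c1 c2 c3 inp adv"

lemma set_pmf_run_Suc:
  "set_pmf (run (Suc m)) = (\<Union>h\<in>set_pmf (run m). (\<lambda>st. h @ [st]) ` set_pmf
      (if m = 0 then round1 n c1 c2 inp (adv 1 h)
       else iter_round n c3 m (adv (Suc m) (butlast h)) (last h)))"
  by (simp add: set_bind_pmf)

lemma length_run: "h \<in> set_pmf (run m) \<Longrightarrow> length h = Suc m"
  by (induction m arbitrary: h) (auto simp: set_pmf_run_Suc)

lemma prob_run_butlast:
  "measure_pmf.prob (run (Suc m)) {h. butlast h \<in> A} = measure_pmf.prob (run m) A"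
proof -
  have "map_pmf butlast (run (Suc m)) = bind_pmf (run m) return_pmf"
    by (simp add: map_bind_pmf map_pmf_comp o_def map_pmf_const del: map_pmf_def)
  then have eq: "run m = map_pmf butlast (run (Suc m))" by (simp add: bind_return_pmf')
  have "measure_pmf.prob (run m) A = measure_pmf.prob (run (Suc m)) (butlast -` A)"
    by (subst eq) (rule measure_map_pmf)
  then show ?thesis by (simp add: vimage_def)
qed

lemma run_bounded:
  assumes "h \<in> set_pmf (run m)" and "1 \<le> k" and "k < length h"
  shows "bounded_by (x_star n h) (h ! k)"
  using assms
proof (induction m arbitrary: h k)
  case 0
  then show ?case using length_run by fastforce
next
  case (Suc m)
  then obtain h' st where h': "h' \<in> set_pmf (run m)" and h: "h = h' @ [st]"
    and st: "st \<in> set_pmf (if m = 0 then round1 n c1 c2 inp (adv 1 h')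
                           else iter_round n c3 m (adv (Suc m) (butlast h')) (last h'))"
    by (auto simp: set_pmf_run_Suc)
  have len: "length h' = Suc m" using length_run[OF h'] .
  show ?case
  proof (cases "m = 0")
    case True
    then obtain coin tg where "st = (round1_vals n inp (adv 1 h') coin,
                                     round1_msgs n (nat \<lceil>c2 * ln (real n)\<rceil>) inp (adv 1 h') coin tg)"
      using st by (auto simp: round1_eq)
    moreover have "k = 1" using Suc.prems len h True by simp
    ultimately show ?thesis
      using round1_max_bounded h len True by (simp add: x_star_def nth_append)
  next
    case False
    then have x: "x_star n h = x_star n h'" using h len by (simp add: x_star_append)
    show ?thesis
    proof (cases "k < length h'")
      case True
      then show ?thesis using Suc.IH[OF h' Suc.prems(2)] h x by (simp add: nth_append)
    next
      case k: False
      have "last h' = h' ! m" using len last_conv_nth[of h'] by fastforce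
      then have "bounded_by (x_star n h') (last h')" using Suc.IH[OF h', of m] len False by simp
      moreover obtain tg where "st = (update (adv (Suc m) (butlast h')) (last h'),
                                      iter_msgs n c3 m (adv (Suc m) (butlast h')) (last h') tg)"
        using st False by (auto simp: iter_round_eq)
      ultimately have "bounded_by (x_star n h') st" using iter_bounded by simp
      moreover have "k = length h'" using k Suc.prems h by simp
      ultimately show ?thesis using h x by simp
    qed
  qed
qed

lemma run_update:
  assumes "h \<in> set_pmf (run m)" and "1 \<le> j" and "Suc j < length h"
  shows "\<exists>B. fst (h ! Suc j) = update B (h ! j)"
  using assms
proof (induction m arbitrary: h)
  case 0
  then show ?case using length_run by fastforce
next
  case (Suc m)
  then obtain h' st where h': "h' \<in> set_pmf (run m)" and h: "h = h' @ [st]"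
    and st: "st \<in> set_pmf (if m = 0 then round1 n c1 c2 inp (adv 1 h')
                           else iter_round n c3 m (adv (Suc m) (butlast h')) (last h'))"
    by (auto simp: set_pmf_run_Suc)
  have len: "length h' = Suc m" using length_run[OF h'] .
  show ?case
  proof (cases "Suc j < length h'")
    case True
    then show ?thesis using Suc.IH[OF h' Suc.prems(2) True] h by (simp add: nth_append)
  next
    case False
    then have j: "j = m" and "m \<noteq> 0" using Suc.prems len h by auto
    then have "fst st = update (adv (Suc m) (butlast h')) (last h')"
      using st fst_iter_round by simp
    moreover have "last h' = h' ! m" using len last_conv_nth[of h'] by fastforce
    ultimately show ?thesis using h len j by (auto simp: nth_append)
  qed
qed

lemma sigma_mono:
  assumes h: "h \<in> set_pmf (run m)" and j: "1 \<le> j" "Suc j < length h"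
  shows "sigma n h (j - 1) \<le> sigma n h j"
proof -
  obtain B where "fst (h ! Suc j) = update B (h ! j)" using run_update[OF h j] by blast
  moreover have "bounded_by (x_star n h) (h ! j)" using run_bounded[OF h j(1)] j by simp
  ultimately show ?thesis
    using holders_update_mono j by (simp add: sigma_eq_card_holders card_mono)
qed

lemma prob_first_iteration_stalls:
  assumes n: "n > 0" and adv: "adv_ok n \<epsilon> adv" and eps: "\<epsilon> \<le> 1/10" and L: "L > 0"
    and L_log: "L \<le> 3/5 * (c2 * ln (real n))" and L_lin: "L \<le> 3/5 * (real n / 100 - 1)"
  shows "measure_pmf.prob (run 2) (stalled n L 1) \<le> 2 powr (- L / 5)"
proof -
  define K where "K = nat \<lceil>c2 * ln (real n)\<rceil>"
  define B1 where "B1 = adv 1 [init_state n inp]"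
  define B2 where "B2 = adv 2 [init_state n inp]"
  define vals where "vals coin = round1_vals n inp B1 coin" for coin
  define st1 where "st1 coin tg = (vals coin, round1_msgs n K inp B1 coin tg)" for coin tg
  have run_2: "run 2 =
    bind_pmf (Pi_pmf {..<n} False (\<lambda>_. bernoulli_pmf (c1 * ln (real n) / real n))) (\<lambda>coin.
      bind_pmf (unif_targets n K) (\<lambda>tg.
        map_pmf (\<lambda>st. [init_state n inp, st1 coin tg, st]) (iter_round n c3 1 B2 (st1 coin tg))))"
    by (simp add: numeral_2_eq_2 round1_eq bind_map_pmf map_bind_pmf bind_assoc_pmf bind_return_pmf
        map_pmf_comp st1_def vals_def K_def B1_def B2_def)
  have K: "1 \<le> K" "L \<le> 3/5 * real K" using L L_log unfolding K_def by linarith+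
  show ?thesis unfolding run_2
  proof (rule measure_pmf_bind_le)
    fix coin
    define x where "x = Max {a. \<exists>v<n. vals coin v = Some a}"
    define H where "H = holders n x (vals coin)"
    define P where "P \<longleftrightarrow> (\<exists>v<n. vals coin v \<noteq> None) \<and> real (card H) < real n / 100"
    obtain J where J: "J \<subseteq> H \<times> {..<K}"
      and J_large: "P \<Longrightarrow> card H \<le> card J \<and> L \<le> 3/5 * card J \<and> real (card J) \<le> real n / 100"
    proof (cases P)
      case True
      then have "1 \<le> card H"
        using holders_Max_nonempty[of n "vals coin"] by (simp add: P_def H_def x_def Suc_le_eq card_gt_0_iff)
      moreover have "real (card H) < real n / 100" using True by (simp add: P_def)
      ultimately obtain J where "J \<subseteq> H \<times> {..<K}" "card H \<le> card J" "L \<le> 3/5 * card J"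
          "real (card J) \<le> real n / 100"
        using obtain_message_subset[OF finite_holders[of n x "vals coin", folded H_def] _ _ K L_lin]
        by blast
      then show ?thesis using that by blast
    qed (use that[of "{}"] in simp)
    show "measure_pmf.prob (bind_pmf (unif_targets n K) (\<lambda>tg.
        map_pmf (\<lambda>st. [init_state n inp, st1 coin tg, st]) (iter_round n c3 1 B2 (st1 coin tg))))
        (stalled n L 1) \<le> 2 powr (- L / 5)"
      unfolding st1_def
    proof (rule prob_round_stalls[OF n])
      show "J \<subseteq> {..<n} \<times> {..<K}" using J holders_subset[of n x "vals coin"] unfolding H_def by blast
      show "B2 \<subseteq> {..<n}" using adv_ok_blocked(1)[OF adv eps] by (simp add: B2_def)
      show "bounded_by x (vals coin, round1_msgs n K inp B1 coin tg)" for tg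
        unfolding x_def vals_def by (rule round1_max_bounded)
      show "(tg j, x) \<in># round1_msgs n K inp B1 coin tg" if "j \<in> J" for tg j
        using that J round1_sends unfolding H_def vals_def by fastforce
    next
      fix tg st
      let ?h = "[init_state n inp, (vals coin, round1_msgs n K inp B1 coin tg), st]"
      assume "fst st = update B2 (vals coin, round1_msgs n K inp B1 coin tg)" and "?h \<in> stalled n L 1"
      moreover have "x_star n ?h = x" by (simp add: x_star_def x_def)
      ultimately have "P" and slow: "\<not> steady_growth L (card H) (card (holders n x (fst st)))"
        by (simp_all add: stalled_def sigma_eq_card_holders P_def H_def)
      then show "L \<le> card J \<and> real (card (holders n x (vals coin))) + card B2 + 3/5 * card J \<le> real n / 8
        \<and> real (card (holders n x (fst st))) < card (holders n x (vals coin)) + 3/5 * card J"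
        using J_large adv_ok_blocked(2)[OF adv eps, of 2 "[init_state n inp]"] L
        unfolding P_def B2_def H_def steady_growth_def by auto
    qed
  qed
qed

lemma prob_iteration_stalls:
  assumes m: "1 \<le> m" and n: "n > 0" and sends: "real m < c3 * ln (real n)"
    and adv: "adv_ok n \<epsilon> adv" and eps: "\<epsilon> \<le> 1/10"
  shows "measure_pmf.prob (run (Suc (Suc m)))
      (stalled n L (Suc m) \<inter> {h. steady_growth L (sigma n h (m - 1)) (sigma n h m)})
    \<le> 2 powr (- L / 5)"
    (is "measure_pmf.prob _ ?E \<le> _")
proof -
  define B1 where "B1 h = adv (Suc m) (butlast h)" for h
  define vals where "vals h = update (B1 h) (last h)" for h
  define st1 where "st1 h tg = (vals h, iter_msgs n c3 m (B1 h) (last h) tg)" for h tg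
  have run: "run (Suc (Suc m)) = bind_pmf (run m) (\<lambda>h. bind_pmf (unif_targets n 2) (\<lambda>tg.
      map_pmf (\<lambda>st. h @ [st1 h tg, st]) (iter_round n c3 (Suc m) (adv (Suc (Suc m)) h) (st1 h tg))))"
    using m by (simp add: iter_round_eq[of n c3 m] st1_def vals_def B1_def bind_assoc_pmf
        bind_map_pmf map_bind_pmf map_pmf_comp)
  show ?thesis unfolding run
  proof (rule measure_pmf_bind_le)
    fix h assume h: "h \<in> set_pmf (run m)"
    define x where "x = x_star n h"
    define H0 where "H0 = holders n x (fst (last h))"
    define S where "S = holders n x (vals h) - B1 h"
    define J where "J = S \<times> {..<2::nat}"
    have len: "length h = Suc m" using length_run[OF h] .
    have "last h = h ! m" using len last_conv_nth[of h] by fastforce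
    then have "bounded_by x (last h)" using run_bounded[OF h, of m] m len by (simp add: x_def)
    then have bounded: "bounded_by x (vals h, iter_msgs n c3 m (B1 h) (last h) tg)" for tg
      by (simp add: vals_def iter_bounded)
    have new: "card (holders n x (vals h)) \<le> card H0 + card S"
      unfolding H0_def S_def vals_def by (rule card_holders_update_le)
    show "measure_pmf.prob (bind_pmf (unif_targets n 2) (\<lambda>tg. map_pmf (\<lambda>st. h @ [st1 h tg, st])
        (iter_round n c3 (Suc m) (adv (Suc (Suc m)) h) (st1 h tg)))) ?E \<le> 2 powr (- L / 5)"
      unfolding st1_def
    proof (rule prob_round_stalls[OF n, where J = J])
      show "J \<subseteq> {..<n} \<times> {..<2}" using holders_subset by (auto simp: J_def S_def)
      show "adv (Suc (Suc m)) h \<subseteq> {..<n}" using adv_ok_blocked(1)[OF adv eps] .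
      show "bounded_by x (vals h, iter_msgs n c3 m (B1 h) (last h) tg)" for tg
        by (rule bounded)
      show "(tg j, x) \<in># iter_msgs n c3 m (B1 h) (last h) tg" if "j \<in> J" for tg j
        using that iter_sends[OF sends, of _ x "B1 h" "last h"] by (auto simp: J_def S_def vals_def)
    next
      fix tg st
      let ?B2 = "adv (Suc (Suc m)) h"
      assume "fst st = update ?B2 (vals h, iter_msgs n c3 m (B1 h) (last h) tg)"
        and "h @ [(vals h, iter_msgs n c3 m (B1 h) (last h) tg), st] \<in> ?E"
      then have growth: "steady_growth L (card H0) (card (holders n x (vals h)))"
        and small: "real (card (holders n x (vals h))) < real n / 100"
        and slow: "\<not> steady_growth L (card (holders n x (vals h))) (card (holders n x (fst st)))"
        using sigma_append_pair[OF len m] by (auto simp: stalled_def x_def H0_def)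
      have "card S \<le> card (holders n x (vals h))" by (rule card_mono) (auto simp: S_def)
      then show "L \<le> card J \<and>
          real (card (holders n x (vals h))) + card ?B2 + 3/5 * card J \<le> real n / 8 \<and>
          real (card (holders n x (fst st))) < card (holders n x (vals h)) + 3/5 * card J"
        using growth small slow new adv_ok_blocked(2)[OF adv eps, of "Suc (Suc m)" h]
        by (auto simp: J_def card_cartesian_product steady_growth_def)
    qed
  qed
qed

lemma prob_stalled:
  assumes n: "n > 0" and adv: "adv_ok n \<epsilon> adv" and eps: "\<epsilon> \<le> 1/10" and L: "L > 0"
    and L_log: "L \<le> 3/5 * (c2 * ln (real n))" and L_lin: "L \<le> 3/5 * (real n / 100 - 1)"
    and t: "1 \<le> t" and sends: "real (t - 1) < c3 * ln (real n)"
  shows "measure_pmf.prob (run (Suc t)) (stalled n L t) \<le> real t * 2 powr (- L / 5)"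
  using t sends
proof (induction t rule: dec_induct)
  case base
  then show ?case
    using prob_first_iteration_stalls[OF n adv eps L L_log L_lin] by (simp add: numeral_2_eq_2)
next
  case (step m)
  let ?E = "stalled n L (Suc m) \<inter> {h. steady_growth L (sigma n h (m - 1)) (sigma n h m)}"
  have sends_m: "real m < c3 * ln (real n)" using step.prems by simp
  have "measure_pmf.prob (run (Suc (Suc m))) (stalled n L (Suc m))
      \<le> measure_pmf.prob (run (Suc (Suc m))) ({h. butlast h \<in> stalled n L m} \<union> ?E)"
  proof (rule measure_pmf_mono_on_support)
    fix h assume h: "h \<in> set_pmf (run (Suc (Suc m)))" and stalled: "h \<in> stalled n L (Suc m)"
    obtain h' st where h': "h' \<in> set_pmf (run (Suc m))" and h_eq: "h = h' @ [st]"
      using h unfolding set_pmf_run_Suc[of "Suc m"] by blast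
    have len: "length h' = Suc (Suc m)" using length_run[OF h'] .
    have "sigma n h (m - 1) = sigma n h' (m - 1)" "sigma n h m = sigma n h' m" "h ! 1 = h' ! 1"
      using len by (simp_all add: h_eq sigma_append nth_append)
    moreover have "sigma n h' (m - 1) \<le> sigma n h' m" using sigma_mono[OF h', of m] step.hyps len by simp
    ultimately show "h \<in> {h. butlast h \<in> stalled n L m} \<union> ?E"
      using stalled by (auto simp: h_eq stalled_def)
  qed
  also have "\<dots> \<le> measure_pmf.prob (run (Suc (Suc m))) {h. butlast h \<in> stalled n L m}
      + measure_pmf.prob (run (Suc (Suc m))) ?E"
    by (rule measure_Un_le) auto
  also have "\<dots> \<le> real m * 2 powr (- L / 5) + 2 powr (- L / 5)"
  proof (rule add_mono)
    show "measure_pmf.prob (run (Suc (Suc m))) {h. butlast h \<in> stalled n L m} \<le> real m * 2 powr (- L / 5)"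
    proof -
      have "real (m - 1) < c3 * ln (real n)" using sends_m step.hyps by (simp add: of_nat_diff)
      then show ?thesis unfolding prob_run_butlast by (rule step.IH)
    qed
    show "measure_pmf.prob (run (Suc (Suc m))) ?E \<le> 2 powr (- L / 5)"
      by (rule prob_iteration_stalls[OF step.hyps(1) n sends_m adv eps])
  qed
  finally show ?case by (simp add: distrib_right)
qed

end

lemma prob_slow_growth:
  assumes adv: "adv_ok n \<epsilon> adv" and eps: "\<epsilon> \<le> 1/10" and c: "0 < c" "c \<le> 3/5 * c2"
    and n: "2 \<le> real n" "c * ln (real n) \<le> 3/5 * (real n / 100 - 1)"
      "c3 * ln (real n) + 1 \<le> real n powr d"
    and d: "d \<le> c * ln 2 / 10"
    and t: "1 \<le> t" "t \<le> nat \<lceil>c3 * ln (real n)\<rceil>"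
  shows "measure_pmf.prob (exec n c1 c2 c3 inp adv (t + 1))
      {h. (\<exists>v<n. fst (h ! 1) v \<noteq> None) \<and> real (sigma n h (t - 1)) < 1/100 * real n \<and>
          real (sigma n h t) < max ((1 + 1/5) * real (sigma n h (t - 1))) (c * ln (real n))}
    \<le> real n powr (- d)"
proof -
  define L where "L = c * ln (real n)"
  have ln_n: "ln (real n) > 0" using n(1) by simp
  then have L: "L > 0" using c by (simp add: L_def)
  have L_log: "L \<le> 3/5 * (c2 * ln (real n))" using c ln_n by (simp add: L_def mult_right_mono)
  have "measure_pmf.prob (exec n c1 c2 c3 inp adv (Suc t))
      {h. (\<exists>v<n. fst (h ! 1) v \<noteq> None) \<and> real (sigma n h (t - 1)) < 1/100 * real n \<and>
          real (sigma n h t) < max ((1 + 1/5) * real (sigma n h (t - 1))) L}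
    \<le> measure_pmf.prob (exec n c1 c2 c3 inp adv (Suc t)) (stalled n L t)"
    by (intro measure_pmf.finite_measure_mono) (auto simp: stalled_def steady_growth_def)
  also have "\<dots> \<le> real t * 2 powr (- L / 5)"
  proof (rule prob_stalled[OF _ adv eps L L_log _ t(1)])
    show "real (t - 1) < c3 * ln (real n)" using t by linarith
  qed (use n(1,2) in \<open>simp_all add: L_def\<close>)
  also have "\<dots> \<le> real n powr d * real n powr (- 2 * d)"
  proof (rule mult_mono)
    show "real t \<le> real n powr d" using t n(3) by linarith
    have "2 powr (- L / 5) = real n powr (- c * ln 2 / 5)"
      using n(1) by (simp add: L_def powr_def)
    also have "\<dots> \<le> real n powr (- 2 * d)" using n(1) d by (intro powr_mono) auto
    finally show "2 powr (- L / 5) \<le> real n powr (- 2 * d)" .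
  qed simp_all
  also have "\<dots> = real n powr (- d)" by (simp add: powr_add[symmetric])
  finally show ?thesis by (simp add: L_def)
qed

theorem lemma13:
  fixes \<epsilon> c1 c2 c3 :: real and K :: nat
  assumes "0 \<le> \<epsilon>" and "\<epsilon> \<le> 1/10" and "c1 > 0" and "c2 > 0" and "c3 > 0"
  shows "\<exists>\<rho> \<alpha> c d :: real. 0 < \<rho> \<and> \<rho> < 1 \<and> \<alpha> > 0 \<and> c > 0 \<and> d > 0 \<and>
    (\<exists>n0::nat. \<forall>n \<ge> n0. \<forall>inp adv t.
       (\<forall>v<n. inp v < n ^ K) \<longrightarrow> adv_ok n \<epsilon> adv \<longrightarrow>
       1 \<le> t \<longrightarrow> t \<le> nat \<lceil>c3 * ln (real n)\<rceil> \<longrightarrow>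
       measure_pmf.prob (exec n c1 c2 c3 inp adv (t + 1))
         {h. (\<exists>v<n. fst (h ! 1) v \<noteq> None) \<and>
             real (sigma n h (t - 1)) < \<rho> * real n \<and>
             real (sigma n h t) < max ((1 + \<alpha>) * real (sigma n h (t - 1))) (c * ln (real n))}
       \<le> real n powr (- d))"
proof -
  define c where "c = 3/5 * c2"
  define d where "d = c * ln 2 / 10"
  have c: "c > 0" and d: "d > 0" using \<open>c2 > 0\<close> by (simp_all add: c_def d_def)
  have "\<forall>\<^sub>F n in sequentially. 2 \<le> real n \<and> c * ln (real n) \<le> 3/5 * (real n / 100 - 1)
      \<and> c3 * ln (real n) + 1 \<le> real n powr d"
    using d by (intro eventually_conj; real_asymp)
  then obtain n0 where "\<forall>n\<ge>n0. 2 \<le> real n \<and> c * ln (real n) \<le> 3/5 * (real n / 100 - 1)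
      \<and> c3 * ln (real n) + 1 \<le> real n powr d"
    by (auto simp: eventually_sequentially)
  then show ?thesis
    using c d \<open>\<epsilon> \<le> 1/10\<close>
    by (intro exI[of _ "1/100"] exI[of _ "1/5"] exI[of _ c] exI[of _ d] conjI exI[of _ n0]
        allI impI prob_slow_growth[of _ \<epsilon>]) (auto simp: c_def d_def)
qed

end
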